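(* Let $n,r\geq 1$ with $\gcd(n,r)>1$. Then for every $q\geq 1$, $n$ prisoners do not have a symmetric winning strategy in the prisoners-and-rooms game with $r$ rooms and $q$ states, starting with all rooms in state $0$.
   Context: The game: there are $n$ prisoners and $r$ rooms; each room contains a switch that is in one of $q$ states $\{0,1,\ldots,q-1\}$. The initial state of every room is known to the prisoners. A warden leads prisoners into rooms one at a time according to a schedule, i.e. an infinite sequence of (prisoner, room) pairs; a schedule is valid if every prisoner visits every room infinitely often. The rooms are indistinguishable to the prisoners, and prisoners have no information about time or other visits: on each visit a prisoner observes only the current state of the room, may change it to any state, and may declare that all prisoners have visited all rooms. A (deterministic) strategy assigns to each prisoner a rule determining, from the sequence of states that prisoner has observed so far (and their own previous actions), what new state to set and whether to declare. A strategy is winning if for every valid schedule some prisoner eventually declares, and every declaration is made only at a time when every prisoner has already visited every room. A strategy is symmetric if all prisoners follow the same rule (the same function of their own observation history). *)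

theory Defs
  imports Main
begin

definition valid_schedule :: "nat \<Rightarrow> nat \<Rightarrow> (nat \<Rightarrow> nat \<times> nat) \<Rightarrow> bool" where
  "valid_schedule n r \<sigma> \<longleftrightarrow>
     (\<forall>t. fst (\<sigma> t) < n \<and> snd (\<sigma> t) < r) \<and>
     (\<forall>p<n. \<forall>k<r. \<forall>T. \<exists>t\<ge>T. \<sigma> t = (p, k))"

(* A strategy gives each prisoner p a rule: from the list of states that p has
   observed so far (including the current observation, last element) it yields
   the new state to set and whether to declare.  (Own previous actions are
   determined by the previous observations, since rules are deterministic.) *)
type_synonym strategy = "nat \<Rightarrow> nat list \<Rightarrow> nat \<times> bool"

fun config :: "(nat \<Rightarrow> nat) \<Rightarrow> strategy \<Rightarrow> (nat \<Rightarrow> nat \<times> nat) \<Rightarrow> nat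
               \<Rightarrow> (nat \<Rightarrow> nat) \<times> (nat \<Rightarrow> nat list)" where
  "config init S \<sigma> 0 = (init, \<lambda>_. [])"
| "config init S \<sigma> (Suc t) =
     (let R = fst (config init S \<sigma> t); H = snd (config init S \<sigma> t);
          p = fst (\<sigma> t); k = snd (\<sigma> t);
          h = H p @ [R k]
      in (R(k := fst (S p h)), H(p := h)))"

definition declares :: "(nat \<Rightarrow> nat) \<Rightarrow> strategy \<Rightarrow> (nat \<Rightarrow> nat \<times> nat) \<Rightarrow> nat \<Rightarrow> bool" where
  "declares init S \<sigma> t =
     (let R = fst (config init S \<sigma> t); H = snd (config init S \<sigma> t);
          p = fst (\<sigma> t); k = snd (\<sigma> t)
      in snd (S p (H p @ [R k])))"

definition winning :: "nat \<Rightarrow> nat \<Rightarrow> nat \<Rightarrow> (nat \<Rightarrow> nat) \<Rightarrow> strategy \<Rightarrow> bool" where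
  "winning n r q init S \<longleftrightarrow>
     (\<forall>p<n. \<forall>h. fst (S p h) < q) \<and>
     (\<forall>\<sigma>. valid_schedule n r \<sigma> \<longrightarrow>
        (\<exists>t. declares init S \<sigma> t) \<and>
        (\<forall>t. declares init S \<sigma> t \<longrightarrow> (\<forall>p<n. \<forall>k<r. \<exists>t'\<le>t. \<sigma> t' = (p, k))))"

definition symmetric_winning :: "nat \<Rightarrow> nat \<Rightarrow> nat \<Rightarrow> (nat \<Rightarrow> nat) \<Rightarrow> (nat list \<Rightarrow> nat \<times> bool) \<Rightarrow> bool" where
  "symmetric_winning n r q init \<rho> \<longleftrightarrow> winning n r q init (\<lambda>_. \<rho>)"

end

theory Submission
  imports Defs "HOL-Number_Theory.Cong"
begin

text \<open>Let \<open>d = gcd n r \<ge> 2\<close>, \<open>n = m d\<close>, \<open>r = s d\<close>, and view the prisoners and rooms as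
  \<open>m\<close> resp. \<open>s\<close> classes of \<open>d\<close> copies each. A schedule of the reduced game with \<open>m\<close>
  prisoners and \<open>s\<close> rooms lifts to the full game by replacing its \<open>b\<close>-th visit, of \<open>a\<close> to
  \<open>c\<close>, by a block of \<open>d\<close> visits in which the copies of \<open>a\<close> visit the copies of \<open>c\<close>
  along some bijection. Under a symmetric strategy all copies of a prisoner (room) then keep
  mirroring it, so whether somebody declares at a given time does not depend on the bijections.
  With rotating bijections the lifted schedule is valid, hence somebody declares at some time
  \<open>t\<close>. Using the identity bijection in the blocks up to \<open>t\<close> instead, the declaration still
  happens at \<open>t\<close>, although the first prisoner has only visited rooms of copy 0 so far.\<close>

lemma add_mult_less: "a < m \<Longrightarrow> j < d \<Longrightarrow> a + j * m < m * (d::nat)"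
proof -
  assume "a < m" "j < d"
  then have "a + j * m < Suc j * m" by simp
  also have "\<dots> \<le> d * m" using \<open>j < d\<close> by (intro mult_le_mono1) simp
  finally show ?thesis by (simp add: mult.commute)
qed

lemma add_mod_bij_betw: "bij_betw (\<lambda>j. (j + e) mod d) {..<d} {..<d::nat}"
proof (cases "d = 0")
  case False
  have "inj_on (\<lambda>j. (j + e) mod d) {..<d}"
    by (rule inj_onI) (metis cong_def cong_add_rcancel_nat cong_less_modulus_unique_nat lessThan_iff)
  moreover have "(\<lambda>j. (j + e) mod d) ` {..<d} \<subseteq> {..<d}" using False by auto
  ultimately show ?thesis by (simp add: bij_betw_def endo_inj_surj)
qed (simp add: bij_betw_def)

lemma valid_schedule_eventually_eq:
  assumes "valid_schedule n r \<sigma>"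
    and "\<And>t. fst (\<sigma>' t) < n \<and> snd (\<sigma>' t) < r"
    and "\<And>t. t \<ge> t\<^sub>0 \<Longrightarrow> \<sigma>' t = \<sigma> t"
  shows "valid_schedule n r \<sigma>'"
  unfolding valid_schedule_def
proof (intro conjI allI impI)
  fix p k T assume "p < n" "k < r"
  then obtain t where "t \<ge> max T t\<^sub>0" "\<sigma> t = (p, k)"
    using assms(1) unfolding valid_schedule_def by blast
  then show "\<exists>t\<ge>T. \<sigma>' t = (p, k)" using assms(3) by auto
qed (use assms(2) in auto)

text \<open>Prisoner \<open>p\<close> is copy \<open>p div m\<close> of class \<open>p mod m\<close>, room \<open>k\<close> is copy \<open>k div s\<close> of
  class \<open>k mod s\<close>.\<close>

definition lift_sched ::
    "nat \<Rightarrow> nat \<Rightarrow> nat \<Rightarrow> (nat \<Rightarrow> nat) \<Rightarrow> (nat \<Rightarrow> nat) \<Rightarrow> (nat \<Rightarrow> nat \<Rightarrow> nat) \<Rightarrow> nat \<Rightarrow> nat \<times> nat" where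
  "lift_sched d m s A C P t =
     (A (t div d) + t mod d * m, C (t div d) + P (t div d) (t mod d) * s)"

lemma lift_sched_block:
  "j < d \<Longrightarrow> lift_sched d m s A C P (b * d + j) = (A b + j * m, C b + P b j * s)"
  by (simp add: lift_sched_def)

lemma lift_sched_less:
  assumes "0 < d" "\<And>b. A b < m" "\<And>b. C b < s" "\<And>b j. j < d \<Longrightarrow> P b j < d"
  shows "fst (lift_sched d m s A C P t) < m * d \<and> snd (lift_sched d m s A C P t) < s * d"
  using assms by (simp add: lift_sched_def add_mult_less)

lemma valid_lift_sched:
  assumes "0 < d" "\<And>b. A b < m" "\<And>b. C b < s" "\<And>b j. j < d \<Longrightarrow> P b j < d"
    and recurrent: "\<And>a c i j T. a < m \<Longrightarrow> c < s \<Longrightarrow> i < d \<Longrightarrow> j < d \<Longrightarrow>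
                       \<exists>b\<ge>T. A b = a \<and> C b = c \<and> P b j = i"
  shows "valid_schedule (m * d) (s * d) (lift_sched d m s A C P)"
  unfolding valid_schedule_def
proof (intro conjI allI impI)
  fix p k T assume p: "p < m * d" and k: "k < s * d"
  have "p div m < d" "k div s < d"
    using p k by (simp_all add: less_mult_imp_div_less mult.commute)
  moreover have "0 < m" "0 < s" using p k by (auto intro: gr0I)
  ultimately obtain b where "b \<ge> T" and
    b: "A b = p mod m" "C b = k mod s" "P b (p div m) = k div s"
    using recurrent by (meson mod_less_divisor)
  have "lift_sched d m s A C P (b * d + p div m) = (p, k)"
    using \<open>p div m < d\<close> by (simp add: lift_sched_block b)
  moreover have "T \<le> b * d + p div m"
    using \<open>b \<ge> T\<close> \<open>0 < d\<close> by (simp add: trans_le_add1 le_trans[OF _ mult_le_mono2[of 1 d b]])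
  ultimately show "\<exists>t\<ge>T. lift_sched d m s A C P t = (p, k)" by blast
qed (use lift_sched_less[OF assms(1-4)] in auto)

lemma valid_lift_sched_rotating:
  assumes "0 < m" "0 < s" "0 < d"
  shows "valid_schedule (m * d) (s * d)
           (lift_sched d m s (\<lambda>b. b mod m) (\<lambda>b. b div m mod s) (\<lambda>b j. (j + b div (m * s)) mod d))"
proof (rule valid_lift_sched)
  fix a c i j T :: nat assume "a < m" "c < s" "i < d" "j < d"
  define b where "b = m * (s * (d * T + (i + d - j)) + c) + a"
  have b_div_m: "b div m = s * (d * T + (i + d - j)) + c" using \<open>a < m\<close> unfolding b_def by simp
  then have b_div_ms: "b div (m * s) = d * T + (i + d - j)" using \<open>c < s\<close> by (simp add: div_mult2_eq)
  have "T \<le> d * T" using \<open>0 < d\<close> by simp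
  also have "\<dots> \<le> b div (m * s)" unfolding b_div_ms by simp
  also have "\<dots> \<le> b" by (rule div_le_dividend)
  finally have "T \<le> b" .
  moreover have "b mod m = a" using \<open>a < m\<close> unfolding b_def by simp
  moreover have "b div m mod s = c" using \<open>c < s\<close> unfolding b_div_m by simp
  moreover have "(j + b div (m * s)) mod d = i" using \<open>i < d\<close> \<open>j < d\<close> unfolding b_div_ms by simp
  ultimately show "\<exists>b\<ge>T. b mod m = a \<and> b div m mod s = c \<and> (j + b div (m * s)) mod d = i"
    by blast
qed (use assms in auto)

locale block_lifting =
  fixes d m s :: nat and I :: "nat \<Rightarrow> nat" and \<rho> :: "nat list \<Rightarrow> nat \<times> bool"
    and A C :: "nat \<Rightarrow> nat" and P :: "nat \<Rightarrow> nat \<Rightarrow> nat"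
  assumes d_pos: "0 < d" and A_less: "A b < m" and C_less: "C b < s"
    and P_bij: "bij_betw (P b) {..<d} {..<d}"
begin

abbreviation reduced :: "nat \<Rightarrow> (nat \<Rightarrow> nat) \<times> (nat \<Rightarrow> nat list)" where
  "reduced \<equiv> config I (\<lambda>_. \<rho>) (\<lambda>b. (A b, C b))"

abbreviation lifted :: "nat \<Rightarrow> (nat \<Rightarrow> nat) \<times> (nat \<Rightarrow> nat list)" where
  "lifted \<equiv> config (\<lambda>k. I (k mod s)) (\<lambda>_. \<rho>) (lift_sched d m s A C P)"

abbreviation reduced_obs :: "nat \<Rightarrow> nat list" where
  "reduced_obs b \<equiv> snd (reduced b) (A b) @ [fst (reduced b) (C b)]"

text \<open>After \<open>j\<close> steps of block \<open>b\<close>, the copies visited so far in the block have made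
  move \<open>b\<close> of the reduced game, all other copies are still in the state of the reduced game
  before that move.\<close>

definition block_invariant :: "nat \<Rightarrow> nat \<Rightarrow> bool" where
  "block_invariant b j \<longleftrightarrow>
     (\<forall>k < s * d. fst (lifted (b * d + j)) k =
        (if k mod s = C b \<and> k div s \<in> P b ` {..<j} then fst (\<rho> (reduced_obs b))
         else fst (reduced b) (k mod s))) \<and>
     (\<forall>p < m * d. snd (lifted (b * d + j)) p =
        (if p mod m = A b \<and> p div m < j then reduced_obs b else snd (reduced b) (p mod m)))"

lemma P_less: "j < d \<Longrightarrow> P b j < d"
  using P_bij by (auto dest: bij_betw_apply)

lemma block_invariant_reduced_obs:
  assumes "j < d" "block_invariant b j"
  shows "snd (lifted (b * d + j)) (A b + j * m) = snd (reduced b) (A b)"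
    and "fst (lifted (b * d + j)) (C b + P b j * s) = fst (reduced b) (C b)"
proof -
  have "P b j \<notin> P b ` {..<j}"
    using P_bij[of b] \<open>j < d\<close> unfolding bij_betw_def inj_on_def by fastforce
  then show "snd (lifted (b * d + j)) (A b + j * m) = snd (reduced b) (A b)"
    and "fst (lifted (b * d + j)) (C b + P b j * s) = fst (reduced b) (C b)"
    using assms A_less[of b] C_less[of b] P_less[OF \<open>j < d\<close>]
    by (simp_all add: block_invariant_def add_mult_less)
qed

lemma block_invariant_Suc:
  assumes "j < d" "block_invariant b j"
  shows "block_invariant b (Suc j)"
proof -
  define p k where "p = A b + j * m" and "k = C b + P b j * s"
  have "lift_sched d m s A C P (b * d + j) = (p, k)"
    unfolding p_def k_def using \<open>j < d\<close> by (rule lift_sched_block)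
  then have lifted_Suc: "lifted (b * d + Suc j) =
      ((fst (lifted (b * d + j)))(k := fst (\<rho> (reduced_obs b))), (snd (lifted (b * d + j)))(p := reduced_obs b))"
    using block_invariant_reduced_obs[OF assms] by (simp add: Let_def p_def k_def)
  have p: "p mod m = A b" "p div m = j" and k: "k mod s = C b" "k div s = P b j"
    using A_less[of b] C_less[of b] unfolding p_def k_def by auto
  have p_iff: "p' mod m = A b \<and> p' div m = j \<longleftrightarrow> p' = p" for p'
    using p by (metis div_mult_mod_eq)
  have k_iff: "k' mod s = C b \<and> k' div s = P b j \<longleftrightarrow> k' = k" for k'
    using k by (metis div_mult_mod_eq)
  have "k' mod s = C b \<and> k' div s \<in> P b ` {..<Suc j} \<longleftrightarrow>
        k' = k \<or> k' mod s = C b \<and> k' div s \<in> P b ` {..<j}" for k'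
    using k_iff[of k'] k by (auto simp: lessThan_Suc)
  moreover have "p' mod m = A b \<and> p' div m < Suc j \<longleftrightarrow>
        p' = p \<or> p' mod m = A b \<and> p' div m < j" for p'
    using p_iff[of p'] p by (auto simp: less_Suc_eq)
  ultimately show ?thesis
    using assms(2) unfolding block_invariant_def lifted_Suc by auto
qed

lemma block_invariant_next_block:
  assumes "block_invariant b d"
  shows "block_invariant (Suc b) 0"
proof -
  have reduced_Suc: "reduced (Suc b) =
      ((fst (reduced b))(C b := fst (\<rho> (reduced_obs b))), (snd (reduced b))(A b := reduced_obs b))"
    by (simp add: Let_def)
  have block_start: "Suc b * d + 0 = b * d + d" by simp
  have "P b ` {..<d} = {..<d}" using P_bij by (simp add: bij_betw_def)
  moreover have "k div s < d" if "k < s * d" for k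
    using that by (simp add: less_mult_imp_div_less mult.commute)
  moreover have "p div m < d" if "p < m * d" for p
    using that by (simp add: less_mult_imp_div_less mult.commute)
  ultimately show ?thesis
    using assms unfolding block_invariant_def reduced_Suc block_start by auto
qed

lemma block_invariant_within_block: "block_invariant b 0 \<Longrightarrow> j \<le> d \<Longrightarrow> block_invariant b j"
  by (induction j) (auto intro: block_invariant_Suc)

lemma block_invariant: "j \<le> d \<Longrightarrow> block_invariant b j"
proof (induction b arbitrary: j)
  case 0
  have "block_invariant 0 0" by (simp add: block_invariant_def)
  then show ?case using 0 by (rule block_invariant_within_block)
next
  case (Suc b)
  have "block_invariant (Suc b) 0" using Suc.IH by (simp add: block_invariant_next_block)
  then show ?case using Suc.prems by (rule block_invariant_within_block)
qed

lemma declares_lift_sched: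
  "declares (\<lambda>k. I (k mod s)) (\<lambda>_. \<rho>) (lift_sched d m s A C P) t =
   declares I (\<lambda>_. \<rho>) (\<lambda>b. (A b, C b)) (t div d)"
proof -
  obtain b j where t: "t = b * d + j" and "j < d"
    using div_mult_mod_eq[of t d] mod_less_divisor[OF d_pos] by metis
  then have "t div d = b" by simp
  moreover have "block_invariant b j" using \<open>j < d\<close> by (simp add: block_invariant)
  ultimately show ?thesis
    using t block_invariant_reduced_obs[OF \<open>j < d\<close>] lift_sched_block[OF \<open>j < d\<close>]
    by (simp add: declares_def Let_def)
qed

end

lemma not_winning_symmetric_common_factor:
  assumes "0 < m" "0 < s" "2 \<le> d"
  shows "\<not> winning (m * d) (s * d) q (\<lambda>_. 0) (\<lambda>_. \<rho>)"
proof
  assume win: "winning (m * d) (s * d) q (\<lambda>_. 0) (\<lambda>_. \<rho>)"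
  define A C where "A b = b mod m" and "C b = b div m mod s" for b
  define P where "P = (\<lambda>b j. (j + b div (m * s)) mod d)"
  have "valid_schedule (m * d) (s * d) (lift_sched d m s A C P)"
    unfolding A_def C_def P_def using assms by (simp add: valid_lift_sched_rotating)
  then obtain t where declares: "declares (\<lambda>_. 0) (\<lambda>_. \<rho>) (lift_sched d m s A C P) t"
    using win unfolding winning_def by blast
  define P' where "P' b = (if b \<le> t div d then id else P b)" for b
  interpret rotating: block_lifting d m s "\<lambda>_. 0" \<rho> A C P
    using assms by unfold_locales (auto simp: A_def C_def P_def add_mod_bij_betw)
  interpret straight: block_lifting d m s "\<lambda>_. 0" \<rho> A C P'
    using assms by unfold_locales (auto simp: A_def C_def P'_def P_def add_mod_bij_betw)
  have "valid_schedule (m * d) (s * d) (lift_sched d m s A C P')"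
  proof (rule valid_schedule_eventually_eq)
    show "fst (lift_sched d m s A C P' t') < m * d \<and> snd (lift_sched d m s A C P' t') < s * d" for t'
      by (rule lift_sched_less) (use straight.d_pos straight.A_less straight.C_less straight.P_less in auto)
    show "lift_sched d m s A C P' t' = lift_sched d m s A C P t'" if "Suc (t div d) * d \<le> t'" for t'
    proof -
      have "Suc (t div d) \<le> t' div d"
        using div_le_mono[OF that, of d] straight.d_pos by (simp only: div_mult_self_is_m)
      then show ?thesis by (simp add: lift_sched_def P'_def)
    qed
  qed (use \<open>valid_schedule (m * d) (s * d) (lift_sched d m s A C P)\<close> in simp)
  moreover have "declares (\<lambda>_. 0) (\<lambda>_. \<rho>) (lift_sched d m s A C P') t"
    using declares rotating.declares_lift_sched straight.declares_lift_sched by simp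
  moreover have "0 < m * d" "s < s * d" using assms by simp_all
  ultimately obtain t' where "t' \<le> t" and visit: "lift_sched d m s A C P' t' = (0, s)"
    using win unfolding winning_def by blast
  then have "P' (t' div d) = id" by (simp add: P'_def div_le_mono)
  then have "C (t' div d) = s" using visit \<open>0 < m\<close> by (auto simp: lift_sched_def)
  then show False using straight.C_less[of "t' div d"] by simp
qed

theorem mainTheorem6:
  fixes n r q :: nat
  assumes "n \<ge> 1" and "r \<ge> 1" and "gcd n r > 1" and "q \<ge> 1"
  shows "\<not> (\<exists>\<rho>. symmetric_winning n r q (\<lambda>_. 0) \<rho>)"
proof -
  define d where "d = gcd n r"
  have n: "n = n div d * d" and r: "r = r div d * d" unfolding d_def by simp_all
  have "0 < n div d" "0 < r div d" "2 \<le> d"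
    using assms unfolding d_def by (simp_all add: div_greater_zero_iff gcd_le1_nat gcd_le2_nat)
  then have "\<not> winning (n div d * d) (r div d * d) q (\<lambda>_. 0) (\<lambda>_. \<rho>)" for \<rho>
    by (rule not_winning_symmetric_common_factor)
  then show ?thesis unfolding symmetric_winning_def using n r by metis
qed

end
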